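(* Let $J\in\mathbb N$ be fixed, and for $j=1,\dots,J$ let $U_j,\hat U_j$ be orthogonal projection matrices of the same rank $K_j$ (of a common dimension). For $0\le\alpha_N<1/(4\sqrt2+2)$ define maps on chains $V=(V_1,\dots,V_J)$ of projectors by $$[\hat{\mathcal G}_{\alpha_N}(V)]_1=\Pi_{K_1}(\hat U_1+\alpha_NV_2),\quad [\hat{\mathcal G}_{\alpha_N}(V)]_j=\Pi_{K_j}(\alpha_NV_{j-1}+\hat U_j+\alpha_NV_{j+1})\ (2\le j\le J-1),\quad [\hat{\mathcal G}_{\alpha_N}(V)]_J=\Pi_{K_J}(\alpha_NV_{J-1}+\hat U_J),$$ and $\mathcal G_{\alpha_N}$ analogously with $\hat U_j$ replaced by $U_j$. Let $(\bar U_j)_j$ be the fixed point of $\hat{\mathcal G}_{\alpha_N}$ and $(U_j^{(\alpha_N)})_j$ the fixed point of $\mathcal G_{\alpha_N}$. Then there is a constant $C>0$, independent of $N$, such that $$\sum_{j=1}^J\|\bar U_j-U_j\|_F\le C\Bigl(\sum_{j=1}^J\|\hat U_j-U_j\|_F+\alpha_N\Bigr).$$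
   Context: $\Pi_K(M)=\sum_{k=1}^K\nu_k\nu_k'$ denotes the orthogonal projector onto the span of the top-$K$ eigenvectors $\nu_1,\dots,\nu_K$ of a symmetric matrix $M$. $\alpha_N$ is a smoothing parameter (possibly depending on a sample size $N$). *)

theory Defs
  imports "HOL-Analysis.Analysis"
begin

definition is_orth_proj :: "real^'n^'n \<Rightarrow> bool" where
  "is_orth_proj P \<longleftrightarrow> transpose P = P \<and> P ** P = P"

definition frob :: "real^'n^'n \<Rightarrow> real" where
  "frob A = sqrt (\<Sum>i\<in>UNIV. \<Sum>j\<in>UNIV. (A $ i $ j)\<^sup>2)"

definition outer :: "real^'n \<Rightarrow> real^'n \<Rightarrow> real^'n^'n" where
  "outer u v = (\<chi> i j. u $ i * v $ j)"

text \<open>top_eig_proj K M P: P = Pi_K(M) = sum over k < K of nu_k nu_k', for some orthonormal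
  eigenbasis nu_0, ..., nu_(n-1) of M ordered by non-increasing eigenvalues
  (a relation, since the eigenbasis is not unique in case of ties).\<close>
definition top_eig_proj :: "nat \<Rightarrow> real^'n^'n \<Rightarrow> real^'n^'n \<Rightarrow> bool" where
  "top_eig_proj K M P \<longleftrightarrow>
     (\<exists>(\<nu>::nat \<Rightarrow> real^'n) (ev::nat \<Rightarrow> real).
        (\<forall>k<CARD('n). M *v \<nu> k = ev k *\<^sub>R \<nu> k) \<and>
        (\<forall>k<CARD('n). \<forall>l<CARD('n). \<nu> k \<bullet> \<nu> l = (if k = l then 1 else 0)) \<and>
        (\<forall>k l. k \<le> l \<longrightarrow> l < CARD('n) \<longrightarrow> ev l \<le> ev k) \<and>
        P = (\<Sum>k<K. outer (\<nu> k) (\<nu> k)))"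

text \<open>Argument of Pi_{K_j} in the j-th component of G_alpha(V) built from data W (j = 1..J);
  neighbour terms outside 1..J are absent.\<close>
definition G_arg :: "nat \<Rightarrow> real \<Rightarrow> (nat \<Rightarrow> real^'n^'n) \<Rightarrow> (nat \<Rightarrow> real^'n^'n) \<Rightarrow> nat \<Rightarrow> real^'n^'n" where
  "G_arg J \<alpha> W V j =
     (if 1 < j then \<alpha> *\<^sub>R V (j - 1) else 0) + W j + (if j < J then \<alpha> *\<^sub>R V (j + 1) else 0)"

definition is_fixed_point :: "nat \<Rightarrow> (nat \<Rightarrow> nat) \<Rightarrow> real \<Rightarrow> (nat \<Rightarrow> real^'n^'n) \<Rightarrow> (nat \<Rightarrow> real^'n^'n) \<Rightarrow> bool" where
  "is_fixed_point J K \<alpha> W V \<longleftrightarrow> (\<forall>j\<in>{1..J}. top_eig_proj (K j) (G_arg J \<alpha> W V j) (V j))"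

end

theory Submission
  imports Defs
begin

text \<open>
  Each component \<open>Ubar j\<close> of a fixed point is the top-\<open>K j\<close> eigenprojector of a matrix
  \<open>M\<close> with \<open>\<parallel>M - U j\<parallel> \<le> \<parallel>Uh j - U j\<parallel> + 2\<alpha> \<Sum>\<^sub>i sqrt (K i)\<close>, because a projector of
  rank \<open>K\<close> has Frobenius norm \<open>sqrt K\<close>. It therefore suffices to show a Davis--Kahan type
  bound \<open>\<parallel>P - U\<parallel> \<le> c \<parallel>M - U\<parallel>\<close> for the top-\<open>K\<close> eigenprojector \<open>P\<close> of \<open>M\<close> and a projector \<open>U\<close>
  of rank \<open>K\<close>. If \<open>\<epsilon> = \<parallel>M - U\<parallel> < 1/2\<close>, the Courant--Fischer argument gives Weyl's
  inequalities \<open>\<mu>\<^sub>K \<ge> 1 - \<epsilon> > 1/2 > \<epsilon> \<ge> \<mu>\<^sub>K\<^sub>+\<^sub>1\<close> for the eigenvalues of \<open>M\<close>; then the identities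
  \<open>\<mu>\<^sub>k (\<nu>\<^sub>k - U \<nu>\<^sub>k) = (I - U)(M - U) \<nu>\<^sub>k\<close> and \<open>(1 - \<mu>\<^sub>k) U \<nu>\<^sub>k = - U (M - U) \<nu>\<^sub>k\<close> show
  \<open>\<parallel>(P - U) \<nu>\<^sub>k\<parallel> \<le> 2 \<parallel>(M - U) \<nu>\<^sub>k\<parallel>\<close> on every eigenvector, and summing over the eigenbasis gives
  \<open>\<parallel>P - U\<parallel> \<le> 2\<epsilon>\<close>. If \<open>\<epsilon> \<ge> 1/2\<close>, the trivial bound \<open>\<parallel>P\<parallel> + \<parallel>U\<parallel>\<close> suffices.

  The bound on \<open>\<alpha>\<close> and the hypotheses on \<open>Uh\<close> only serve to make the fixed point exist;
  the estimate holds for every fixed point.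
\<close>

lemma sum_mult_add_le:
  fixes c d :: "'a \<Rightarrow> real"
  assumes "finite A" "\<forall>j\<in>A. 0 \<le> c j \<and> 0 \<le> d j" "0 \<le> e"
  shows "(\<Sum>j\<in>A. c j * (d j + e)) \<le> (\<Sum>j\<in>A. c j) * ((\<Sum>j\<in>A. d j) + e)"
proof -
  have "(\<Sum>j\<in>A. c j * (d j + e)) \<le> (\<Sum>j\<in>A. (\<Sum>i\<in>A. c i) * d j + c j * e)"
  proof (rule sum_mono)
    fix j assume "j \<in> A"
    then have "c j \<le> (\<Sum>i\<in>A. c i)"
      using assms(1,2) by (auto intro: member_le_sum)
    then show "c j * (d j + e) \<le> (\<Sum>i\<in>A. c i) * d j + c j * e"
      using assms(2) \<open>j \<in> A\<close> by (simp add: distrib_left mult_right_mono)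
  qed
  also have "\<dots> = (\<Sum>j\<in>A. c j) * ((\<Sum>j\<in>A. d j) + e)"
    by (simp add: sum.distrib sum_distrib_left sum_distrib_right algebra_simps)
  finally show ?thesis .
qed

lemma frob_eq_norm: "frob A = norm A"
  by (simp add: frob_def norm_eq_sqrt_inner inner_vec_def power2_eq_square)

lemma rank_le_card: "rank (A::real^'n^'n) \<le> CARD('n)"
  using rank_bound[of A] by simp

lemma subspace_range_matrix_vector_mult: "subspace (range ((*v) (A::real^'n^'m)))"
  by (rule linear_subspace_image[OF matrix_vector_mul_linear subspace_UNIV])

lemma exists_nonzero_orthogonal_to_subspace:
  fixes W S :: "'a::euclidean_space set"
  assumes "subspace W" "subspace S" "dim S < dim W"
  shows "\<exists>x\<in>W. x \<noteq> 0 \<and> (\<forall>y\<in>S. orthogonal y x)"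
proof -
  let ?Sperp = "{x. \<forall>y\<in>S. orthogonal y x}"
  have "dim ?Sperp + dim S = DIM('a)"
    using dim_subspace_orthogonal_to_vectors[OF assms(2) subspace_UNIV] by simp
  moreover have "dim {x + y |x y. x \<in> W \<and> y \<in> ?Sperp} \<le> DIM('a)"
    by (rule dim_subset_UNIV)
  ultimately have "dim (W \<inter> ?Sperp) \<noteq> 0"
    using dim_sums_Int[OF assms(1) subspace_orthogonal_to_vectors[of S]] assms(3) by linarith
  then show ?thesis by auto
qed

lemma norm_matrix_vector_le: "norm ((A::real^'n^'m) *v x) \<le> norm A * norm x"
proof -
  have "(norm (A *v x))\<^sup>2 = (\<Sum>i\<in>UNIV. ((A *v x) $ i)\<^sup>2)"
    by (simp add: norm_vec_def L2_set_def sum_nonneg)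
  also have "\<dots> = (\<Sum>i\<in>UNIV. ((A $ i) \<bullet> x)\<^sup>2)"
    by (simp add: matrix_vector_mult_def inner_vec_def mult.commute)
  also have "\<dots> \<le> (\<Sum>i\<in>UNIV. (norm (A $ i))\<^sup>2 * (norm x)\<^sup>2)"
    by (intro sum_mono) (metis Cauchy_Schwarz_ineq2 abs_ge_zero power_mono power_mult_distrib power2_abs)
  also have "\<dots> = (norm A * norm x)\<^sup>2"
    by (simp add: norm_vec_def L2_set_def sum_nonneg power_mult_distrib sum_distrib_right)
  finally show ?thesis
    by (rule power2_le_imp_le) simp
qed

lemma abs_inner_matrix_vector_le: "\<bar>x \<bullet> ((A::real^'n^'n) *v x)\<bar> \<le> norm A * (norm x)\<^sup>2"
proof -
  have "\<bar>x \<bullet> (A *v x)\<bar> \<le> norm x * norm (A *v x)" by (rule Cauchy_Schwarz_ineq2)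
  also have "\<dots> \<le> norm x * (norm A * norm x)"
    by (simp add: mult_left_mono norm_matrix_vector_le)
  finally show ?thesis by (simp add: power2_eq_square mult_ac)
qed

lemma sum_matrix_vector_mult: "(\<Sum>k\<in>S. A k) *v x = (\<Sum>k\<in>S. A k *v x)"
  by (induction S rule: infinite_finite_induct) (auto simp: matrix_vector_mult_add_rdistrib)

lemma outer_self_mult_vector: "outer u u *v x = (u \<bullet> x) *\<^sub>R u"
  by (simp add: vec_eq_iff outer_def matrix_vector_mult_def inner_vec_def sum_distrib_left mult_ac)

section \<open>Orthogonal projections\<close>

lemma orth_proj_idem: "is_orth_proj U \<Longrightarrow> U *v (U *v x) = U *v x"
  by (simp add: is_orth_proj_def matrix_vector_mul_assoc)

lemma orth_proj_inner_commute:
  assumes "is_orth_proj (U::real^'n^'n)"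
  shows "(U *v x) \<bullet> y = x \<bullet> (U *v y)"
proof -
  have "(U *v x) \<bullet> y = (x v* transpose U) \<bullet> y" by simp
  also have "\<dots> = x \<bullet> (U *v y)"
    using assms by (simp add: is_orth_proj_def dot_lmul_matrix)
  finally show ?thesis .
qed

lemma orth_proj_pythagoras:
  assumes "is_orth_proj (U::real^'n^'n)"
  shows "(norm x)\<^sup>2 = (norm (U *v x))\<^sup>2 + (norm (x - U *v x))\<^sup>2"
proof -
  have "orthogonal (U *v x) (x - U *v x)"
    using orth_proj_inner_commute[OF assms, of x "U *v x"] orth_proj_idem[OF assms, of x]
    by (simp add: orthogonal_def inner_diff_right inner_commute)
  then show ?thesis
    using norm_add_Pythagorean[of "U *v x" "x - U *v x"] by simp
qed

lemma orth_proj_norm_le: "is_orth_proj (U::real^'n^'n) \<Longrightarrow> norm (U *v x) \<le> norm x"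
  using orth_proj_pythagoras[of U x] by (simp add: power2_le_imp_le)

lemma orth_proj_norm_diff_le: "is_orth_proj (U::real^'n^'n) \<Longrightarrow> norm (x - U *v x) \<le> norm x"
  using orth_proj_pythagoras[of U x] by (simp add: power2_le_imp_le)

lemma orth_proj_eq_0_of_orthogonal_range:
  assumes "is_orth_proj (U::real^'n^'n)" "\<forall>y\<in>range ((*v) U). orthogonal y x"
  shows "U *v x = 0"
proof -
  have "(U *v x) \<bullet> (U *v x) = (U *v x) \<bullet> x"
    using orth_proj_inner_commute[OF assms(1), of x "U *v x"] orth_proj_idem[OF assms(1), of x]
    by (simp add: inner_commute)
  also have "\<dots> = 0" using assms(2) by (simp add: orthogonal_def)
  finally show ?thesis by simp
qed

section \<open>Orthonormal eigenframes\<close>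

definition orthonormal_frame :: "(nat \<Rightarrow> real^'n) \<Rightarrow> bool" where
  "orthonormal_frame \<nu> \<longleftrightarrow>
     (\<forall>k<CARD('n). \<forall>l<CARD('n). \<nu> k \<bullet> \<nu> l = (if k = l then 1 else 0))"

definition sorted_eigenframe :: "real^'n^'n \<Rightarrow> (nat \<Rightarrow> real^'n) \<Rightarrow> (nat \<Rightarrow> real) \<Rightarrow> bool" where
  "sorted_eigenframe M \<nu> ev \<longleftrightarrow> orthonormal_frame \<nu> \<and>
     (\<forall>k<CARD('n). M *v \<nu> k = ev k *\<^sub>R \<nu> k) \<and>
     (\<forall>k l. k \<le> l \<longrightarrow> l < CARD('n) \<longrightarrow> ev l \<le> ev k)"

lemma top_eig_proj_iff:
  "top_eig_proj K M P \<longleftrightarrow> (\<exists>\<nu> ev. sorted_eigenframe M \<nu> ev \<and> P = (\<Sum>k<K. outer (\<nu> k) (\<nu> k)))"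
  unfolding top_eig_proj_def sorted_eigenframe_def orthonormal_frame_def by blast

lemma orthonormal_frame_inner:
  fixes \<nu> :: "nat \<Rightarrow> real^'n"
  assumes "orthonormal_frame \<nu>" "k < CARD('n)" "l < CARD('n)"
  shows "\<nu> k \<bullet> \<nu> l = (if k = l then 1 else 0)"
  using assms unfolding orthonormal_frame_def by blast

lemma sorted_eigenframe_orthonormal: "sorted_eigenframe M \<nu> ev \<Longrightarrow> orthonormal_frame \<nu>"
  unfolding sorted_eigenframe_def by blast

lemma sorted_eigenframe_eigenvector:
  fixes M :: "real^'n^'n"
  shows "sorted_eigenframe M \<nu> ev \<Longrightarrow> k < CARD('n) \<Longrightarrow> M *v \<nu> k = ev k *\<^sub>R \<nu> k"
  unfolding sorted_eigenframe_def by blast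

lemma sorted_eigenframe_antimono:
  fixes M :: "real^'n^'n"
  assumes "sorted_eigenframe M \<nu> ev" "k \<le> l" "l < CARD('n)"
  shows "ev l \<le> ev k"
  using assms unfolding sorted_eigenframe_def by blast

lemma orthonormal_frame_inj_on:
  fixes \<nu> :: "nat \<Rightarrow> real^'n"
  assumes "orthonormal_frame \<nu>" "L \<subseteq> {..<CARD('n)}"
  shows "inj_on \<nu> L"
proof (rule inj_onI)
  fix k l assume "k \<in> L" "l \<in> L" "\<nu> k = \<nu> l"
  moreover have "k < CARD('n)" "l < CARD('n)"
    using \<open>k \<in> L\<close> \<open>l \<in> L\<close> assms(2) by auto
  ultimately show "k = l"
    using orthonormal_frame_inner[OF assms(1)] by (metis zero_neq_one)
qed

lemma orthonormal_frame_independent: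
  fixes \<nu> :: "nat \<Rightarrow> real^'n"
  assumes "orthonormal_frame \<nu>" "L \<subseteq> {..<CARD('n)}"
  shows "independent (\<nu> ` L)"
proof (rule pairwise_orthogonal_independent)
  show "pairwise orthogonal (\<nu> ` L)"
  proof (rule pairwiseI, clarsimp)
    fix k l assume "k \<in> L" "l \<in> L" "\<nu> k \<noteq> \<nu> l"
    moreover have "k < CARD('n)" "l < CARD('n)"
      using \<open>k \<in> L\<close> \<open>l \<in> L\<close> assms(2) by auto
    ultimately show "orthogonal (\<nu> k) (\<nu> l)"
      using orthonormal_frame_inner[OF assms(1), of k l] by (auto simp: orthogonal_def)
  qed
  show "0 \<notin> \<nu> ` L"
    using orthonormal_frame_inner[OF assms(1)] assms(2) by fastforce
qed

lemma orthonormal_frame_span: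
  fixes \<nu> :: "nat \<Rightarrow> real^'n"
  assumes "orthonormal_frame \<nu>"
  shows "span (\<nu> ` {..<CARD('n)}) = UNIV"
proof -
  have "card (\<nu> ` {..<CARD('n)}) = dim (UNIV :: (real^'n) set)"
    using card_image[OF orthonormal_frame_inj_on[OF assms]] by simp
  then show ?thesis
    using card_eq_dim[of "\<nu> ` {..<CARD('n)}" UNIV] orthonormal_frame_independent[OF assms]
    by auto
qed

lemma orthonormal_frame_expansion:
  fixes \<nu> :: "nat \<Rightarrow> real^'n"
  assumes "orthonormal_frame \<nu>"
  shows "x = (\<Sum>k<CARD('n). (x \<bullet> \<nu> k) *\<^sub>R \<nu> k)"
proof -
  define z where "z = x - (\<Sum>k<CARD('n). (x \<bullet> \<nu> k) *\<^sub>R \<nu> k)"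
  have "orthogonal z (\<nu> l)" if "l < CARD('n)" for l
  proof -
    have "(\<Sum>k<CARD('n). (x \<bullet> \<nu> k) * (\<nu> k \<bullet> \<nu> l)) = (\<Sum>k<CARD('n). if k = l then x \<bullet> \<nu> l else 0)"
      using orthonormal_frame_inner[OF assms _ that] by (intro sum.cong) auto
    then show ?thesis
      using that by (simp add: z_def orthogonal_def inner_diff_left inner_sum_left)
  qed
  then have "orthogonal z z"
    using orthogonal_to_span[of z "\<nu> ` {..<CARD('n)}" z] orthonormal_frame_span[OF assms] by auto
  then show ?thesis by (simp add: z_def orthogonal_def)
qed

lemma orthonormal_frame_inner_eq_sum:
  fixes \<nu> :: "nat \<Rightarrow> real^'n"
  assumes "orthonormal_frame \<nu>"
  shows "x \<bullet> y = (\<Sum>k<CARD('n). (x \<bullet> \<nu> k) * (y \<bullet> \<nu> k))"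
proof -
  have "x \<bullet> y = (\<Sum>k<CARD('n). (x \<bullet> \<nu> k) *\<^sub>R \<nu> k) \<bullet> y"
    using orthonormal_frame_expansion[OF assms, of x] by simp
  also have "\<dots> = (\<Sum>k<CARD('n). (x \<bullet> \<nu> k) * (y \<bullet> \<nu> k))"
    unfolding inner_sum_left inner_scaleR_left by (simp add: inner_commute)
  finally show ?thesis .
qed

lemma orthonormal_frame_parseval:
  fixes \<nu> :: "nat \<Rightarrow> real^'n"
  assumes "orthonormal_frame \<nu>"
  shows "(norm x)\<^sup>2 = (\<Sum>k<CARD('n). (x \<bullet> \<nu> k)\<^sup>2)"
  unfolding power2_norm_eq_inner orthonormal_frame_inner_eq_sum[OF assms, of x x]
  by (simp only: power2_eq_square)

lemma norm_matrix_eq_frame_sum: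
  fixes \<nu> :: "nat \<Rightarrow> real^'n" and A :: "real^'n^'m"
  assumes "orthonormal_frame \<nu>"
  shows "(norm A)\<^sup>2 = (\<Sum>k<CARD('n). (norm (A *v \<nu> k))\<^sup>2)"
proof -
  have "(norm A)\<^sup>2 = (\<Sum>i\<in>UNIV. (norm (A $ i))\<^sup>2)"
    by (simp add: norm_vec_def L2_set_def sum_nonneg)
  also have "\<dots> = (\<Sum>i\<in>UNIV. \<Sum>k<CARD('n). ((A *v \<nu> k) $ i)\<^sup>2)"
    by (simp add: orthonormal_frame_parseval[OF assms] matrix_vector_mult_def inner_vec_def mult.commute)
  also have "\<dots> = (\<Sum>k<CARD('n). (norm (A *v \<nu> k))\<^sup>2)"
    by (subst sum.swap) (simp add: norm_vec_def L2_set_def sum_nonneg)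
  finally show ?thesis .
qed

lemma inner_mult_vector_eigenframe:
  fixes \<nu> :: "nat \<Rightarrow> real^'n" and M :: "real^'n^'n"
  assumes "sorted_eigenframe M \<nu> ev"
  shows "x \<bullet> (M *v x) = (\<Sum>k<CARD('n). ev k * (x \<bullet> \<nu> k)\<^sup>2)"
proof -
  note frame = sorted_eigenframe_orthonormal[OF assms]
  have "M *v x = M *v (\<Sum>k<CARD('n). (x \<bullet> \<nu> k) *\<^sub>R \<nu> k)"
    using orthonormal_frame_expansion[OF frame, of x] by simp
  also have "\<dots> = (\<Sum>k<CARD('n). (x \<bullet> \<nu> k) *\<^sub>R (M *v \<nu> k))"
    by (simp add: linear_sum[OF matrix_vector_mul_linear] matrix_vector_mult_scaleR)
  also have "\<dots> = (\<Sum>k<CARD('n). (x \<bullet> \<nu> k) *\<^sub>R ev k *\<^sub>R \<nu> k)"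
    using sorted_eigenframe_eigenvector[OF assms] by simp
  finally show ?thesis
    by (simp add: inner_sum_right power2_eq_square mult_ac)
qed

lemma sum_outer_frame_mult_vector:
  fixes \<nu> :: "nat \<Rightarrow> real^'n"
  assumes "orthonormal_frame \<nu>" "K \<le> CARD('n)" "l < CARD('n)"
  shows "(\<Sum>k<K. outer (\<nu> k) (\<nu> k)) *v \<nu> l = (if l < K then \<nu> l else 0)"
proof -
  have "(\<Sum>k<K. outer (\<nu> k) (\<nu> k)) *v \<nu> l = (\<Sum>k<K. (\<nu> k \<bullet> \<nu> l) *\<^sub>R \<nu> k)"
    by (simp add: sum_matrix_vector_mult outer_self_mult_vector)
  also have "\<dots> = (\<Sum>k<K. if k = l then \<nu> l else 0)"
    using orthonormal_frame_inner[OF assms(1) _ assms(3)] assms(2) by (intro sum.cong) auto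
  finally show ?thesis by simp
qed

lemma norm_sum_outer_frame:
  fixes \<nu> :: "nat \<Rightarrow> real^'n"
  assumes "orthonormal_frame \<nu>" "K \<le> CARD('n)"
  shows "norm (\<Sum>k<K. outer (\<nu> k) (\<nu> k)) = sqrt K"
proof -
  have "(norm (\<Sum>k<K. outer (\<nu> k) (\<nu> k)))\<^sup>2 = (\<Sum>l<CARD('n). if l < K then 1 else 0)"
    unfolding norm_matrix_eq_frame_sum[OF assms(1)]
    using sum_outer_frame_mult_vector[OF assms] orthonormal_frame_inner[OF assms(1)]
    by (intro sum.cong) (auto simp: power2_norm_eq_inner)
  also have "\<dots> = card ({..<CARD('n)} \<inter> {l. l < K})"
    by (simp add: sum.If_cases)
  also have "{..<CARD('n)} \<inter> {l. l < K} = {..<K}"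
    using assms(2) by auto
  finally show ?thesis
    by (simp add: real_sqrt_unique)
qed

lemma norm_top_eig_proj:
  fixes M P :: "real^'n^'n"
  assumes "top_eig_proj K M P" "K \<le> CARD('n)"
  shows "norm P = sqrt K"
proof -
  obtain \<nu> ev where "sorted_eigenframe M \<nu> ev" "P = (\<Sum>k<K. outer (\<nu> k) (\<nu> k))"
    using assms(1) unfolding top_eig_proj_iff by blast
  then show ?thesis
    using norm_sum_outer_frame[OF sorted_eigenframe_orthonormal assms(2)] by simp
qed

section \<open>Perturbation of top eigenprojectors\<close>

lemma eigenframe_rayleigh_le:
  fixes M :: "real^'n^'n"
  assumes "sorted_eigenframe M \<nu> ev" "m < CARD('n)" "\<forall>k<m. x \<bullet> \<nu> k = 0"
  shows "x \<bullet> (M *v x) \<le> ev m * (norm x)\<^sup>2"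
proof -
  have "x \<bullet> (M *v x) = (\<Sum>k<CARD('n). ev k * (x \<bullet> \<nu> k)\<^sup>2)"
    by (rule inner_mult_vector_eigenframe[OF assms(1)])
  also have "\<dots> \<le> (\<Sum>k<CARD('n). ev m * (x \<bullet> \<nu> k)\<^sup>2)"
  proof (rule sum_mono)
    fix k assume "k \<in> {..<CARD('n)}"
    then have "k < m \<or> ev k \<le> ev m"
      using sorted_eigenframe_antimono[OF assms(1), of m k] by (meson lessThan_iff not_less)
    then show "ev k * (x \<bullet> \<nu> k)\<^sup>2 \<le> ev m * (x \<bullet> \<nu> k)\<^sup>2"
      using assms(3) by (auto intro: mult_right_mono)
  qed
  also have "\<dots> = ev m * (norm x)\<^sup>2"
    by (simp add: orthonormal_frame_parseval[OF sorted_eigenframe_orthonormal[OF assms(1)]]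
        sum_distrib_left)
  finally show ?thesis .
qed

lemma eigenframe_rayleigh_ge:
  fixes M :: "real^'n^'n"
  assumes "sorted_eigenframe M \<nu> ev" "m < CARD('n)" "x \<in> span (\<nu> ` {..m})"
  shows "ev m * (norm x)\<^sup>2 \<le> x \<bullet> (M *v x)"
proof -
  note frame = sorted_eigenframe_orthonormal[OF assms(1)]
  have beyond_m: "x \<bullet> \<nu> k = 0" if "m < k" "k < CARD('n)" for k
  proof -
    have "orthogonal (\<nu> k) x"
      using orthonormal_frame_inner[OF frame] that assms(2,3)
      by (intro orthogonal_to_span[of x]) (auto simp: orthogonal_def)
    then show ?thesis by (simp add: orthogonal_def inner_commute)
  qed
  have "ev m * (norm x)\<^sup>2 = (\<Sum>k<CARD('n). ev m * (x \<bullet> \<nu> k)\<^sup>2)"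
    by (simp add: orthonormal_frame_parseval[OF frame] sum_distrib_left)
  also have "\<dots> \<le> (\<Sum>k<CARD('n). ev k * (x \<bullet> \<nu> k)\<^sup>2)"
  proof (rule sum_mono)
    fix k assume "k \<in> {..<CARD('n)}"
    then have "m < k \<or> ev m \<le> ev k"
      using sorted_eigenframe_antimono[OF assms(1), of k m] assms(2) by (meson not_less)
    then show "ev m * (x \<bullet> \<nu> k)\<^sup>2 \<le> ev k * (x \<bullet> \<nu> k)\<^sup>2"
      using beyond_m \<open>k \<in> {..<CARD('n)}\<close> by (auto intro: mult_right_mono)
  qed
  also have "\<dots> = x \<bullet> (M *v x)"
    by (rule inner_mult_vector_eigenframe[OF assms(1), symmetric])
  finally show ?thesis .
qed

lemma inner_mult_vector_ge_of_fixed: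
  fixes M U :: "real^'n^'n"
  assumes "U *v x = x"
  shows "(1 - norm (M - U)) * (norm x)\<^sup>2 \<le> x \<bullet> (M *v x)"
proof -
  have "x \<bullet> (M *v x) = (norm x)\<^sup>2 + x \<bullet> ((M - U) *v x)"
    using assms by (simp add: matrix_vector_mult_diff_rdistrib inner_diff_right power2_norm_eq_inner)
  then show ?thesis
    using abs_inner_matrix_vector_le[of x "M - U"] by (simp add: algebra_simps)
qed

lemma inner_mult_vector_le_of_kernel:
  fixes M U :: "real^'n^'n"
  assumes "U *v x = 0"
  shows "x \<bullet> (M *v x) \<le> norm (M - U) * (norm x)\<^sup>2"
proof -
  have "x \<bullet> (M *v x) = x \<bullet> ((M - U) *v x)"
    using assms by (simp add: matrix_vector_mult_diff_rdistrib inner_diff_right)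
  then show ?thesis
    using abs_inner_matrix_vector_le[of x "M - U"] by linarith
qed

lemma eigenvalue_before_rank_ge:
  fixes M U :: "real^'n^'n"
  assumes eig: "sorted_eigenframe M \<nu> ev" and U: "is_orth_proj U" and "0 < rank U"
  shows "1 - norm (M - U) \<le> ev (rank U - 1)"
proof -
  let ?S = "span (\<nu> ` {..<rank U - 1})"
  have "dim ?S \<le> rank U - 1"
    using dim_le_card[of ?S "\<nu> ` {..<rank U - 1}"] card_image_le[of "{..<rank U - 1}" \<nu>]
    by (simp add: span_superset)
  also have "\<dots> < dim (range ((*v) U))"
    using \<open>0 < rank U\<close> by (simp add: rank_dim_range)
  finally obtain x where x: "x \<in> range ((*v) U)" "x \<noteq> 0" "\<forall>y\<in>?S. orthogonal y x"
    using exists_nonzero_orthogonal_to_subspace[OF subspace_range_matrix_vector_mult subspace_span]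
    by blast
  have "U *v x = x"
    using x(1) orth_proj_idem[OF U] by auto
  then have "(1 - norm (M - U)) * (norm x)\<^sup>2 \<le> x \<bullet> (M *v x)"
    by (rule inner_mult_vector_ge_of_fixed)
  also have "\<dots> \<le> ev (rank U - 1) * (norm x)\<^sup>2"
  proof (rule eigenframe_rayleigh_le[OF eig])
    show "rank U - 1 < CARD('n)"
      using rank_le_card[of U] \<open>0 < rank U\<close> by linarith
    show "\<forall>k<rank U - 1. x \<bullet> \<nu> k = 0"
    proof (intro allI impI)
      fix k assume "k < rank U - 1"
      then have "\<nu> k \<in> ?S" by (simp add: span_base)
      then show "x \<bullet> \<nu> k = 0"
        using x(3) by (auto simp: orthogonal_def inner_commute)
    qed
  qed
  finally show ?thesis
    using x(2) by simp
qed

lemma eigenvalue_at_rank_le: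
  fixes M U :: "real^'n^'n"
  assumes eig: "sorted_eigenframe M \<nu> ev" and U: "is_orth_proj U" and "rank U < CARD('n)"
  shows "ev (rank U) \<le> norm (M - U)"
proof -
  let ?T = "span (\<nu> ` {..rank U})"
  have "dim (range ((*v) U)) < rank U + 1"
    by (simp add: rank_dim_range)
  also have "\<dots> = dim ?T"
  proof -
    note frame = sorted_eigenframe_orthonormal[OF eig]
    have "{..rank U} \<subseteq> {..<CARD('n)}"
      using \<open>rank U < CARD('n)\<close> by auto
    then show ?thesis
      using orthonormal_frame_independent[OF frame] orthonormal_frame_inj_on[OF frame]
      by (simp add: dim_eq_card_independent card_image)
  qed
  finally obtain x where x: "x \<in> ?T" "x \<noteq> 0" "\<forall>y\<in>range ((*v) U). orthogonal y x"
    using exists_nonzero_orthogonal_to_subspace[OF subspace_span subspace_range_matrix_vector_mult]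
    by blast
  have "ev (rank U) * (norm x)\<^sup>2 \<le> x \<bullet> (M *v x)"
    by (rule eigenframe_rayleigh_ge[OF eig \<open>rank U < CARD('n)\<close> x(1)])
  also have "\<dots> \<le> norm (M - U) * (norm x)\<^sup>2"
    by (rule inner_mult_vector_le_of_kernel[OF orth_proj_eq_0_of_orthogonal_range[OF U x(3)]])
  finally show ?thesis
    using x(2) by simp
qed

lemma eigenvector_sub_orth_proj_le:
  fixes M U :: "real^'n^'n"
  assumes U: "is_orth_proj U" and eig: "M *v v = \<mu> *\<^sub>R v" and "1/2 < \<mu>"
  shows "norm (v - U *v v) \<le> 2 * norm ((M - U) *v v)"
proof -
  let ?E = "M - U"
  have Mv: "M *v v = U *v v + ?E *v v"
    by (simp add: matrix_vector_mult_diff_rdistrib)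
  have "\<mu> *\<^sub>R (v - U *v v) = M *v v - U *v (M *v v)"
    using eig by (simp add: algebra_simps matrix_vector_mult_scaleR)
  also have "\<dots> = ?E *v v - U *v (?E *v v)"
    unfolding Mv by (simp add: matrix_vector_right_distrib orth_proj_idem[OF U])
  finally have eq: "\<mu> *\<^sub>R (v - U *v v) = ?E *v v - U *v (?E *v v)" .
  have "\<mu> * norm (v - U *v v) = norm (\<mu> *\<^sub>R (v - U *v v))"
    using \<open>1/2 < \<mu>\<close> by (simp add: abs_of_pos)
  also have "\<dots> \<le> norm (?E *v v)"
    unfolding eq by (rule orth_proj_norm_diff_le[OF U])
  finally show ?thesis
    using mult_right_mono[of "1/2" \<mu> "norm (v - U *v v)"] \<open>1/2 < \<mu>\<close> by simp
qed

lemma orth_proj_eigenvector_le: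
  fixes M U :: "real^'n^'n"
  assumes U: "is_orth_proj U" and eig: "M *v v = \<mu> *\<^sub>R v" and "\<mu> < 1/2"
  shows "norm (U *v v) \<le> 2 * norm ((M - U) *v v)"
proof -
  let ?E = "M - U"
  have Mv: "M *v v = U *v v + ?E *v v"
    by (simp add: matrix_vector_mult_diff_rdistrib)
  have "(1 - \<mu>) *\<^sub>R (U *v v) = U *v v - U *v (M *v v)"
    using eig by (simp add: algebra_simps matrix_vector_mult_scaleR)
  also have "\<dots> = - (U *v (?E *v v))"
    unfolding Mv by (simp add: matrix_vector_right_distrib orth_proj_idem[OF U])
  finally have eq: "(1 - \<mu>) *\<^sub>R (U *v v) = - (U *v (?E *v v))" .
  have "(1 - \<mu>) * norm (U *v v) = norm ((1 - \<mu>) *\<^sub>R (U *v v))"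
    using \<open>\<mu> < 1/2\<close> by (simp add: abs_of_pos)
  also have "\<dots> \<le> norm (?E *v v)"
    unfolding eq norm_minus_cancel by (rule orth_proj_norm_le[OF U])
  finally show ?thesis
    using mult_right_mono[of "1/2" "1 - \<mu>" "norm (U *v v)"] \<open>\<mu> < 1/2\<close> by simp
qed

lemma top_eig_proj_diff_mult_eigenvector_le:
  fixes M U :: "real^'n^'n"
  assumes eig: "sorted_eigenframe M \<nu> ev" and U: "is_orth_proj U"
    and small: "norm (M - U) < 1/2" and k: "k < CARD('n)"
  shows "norm (((\<Sum>l<rank U. outer (\<nu> l) (\<nu> l)) - U) *v \<nu> k) \<le> 2 * norm ((M - U) *v \<nu> k)"
proof -
  have Pv: "(\<Sum>l<rank U. outer (\<nu> l) (\<nu> l)) *v \<nu> k = (if k < rank U then \<nu> k else 0)"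
    by (rule sum_outer_frame_mult_vector[OF sorted_eigenframe_orthonormal[OF eig] rank_le_card k])
  note ev_k = sorted_eigenframe_eigenvector[OF eig k]
  show ?thesis
  proof (cases "k < rank U")
    case True
    have "1 - norm (M - U) \<le> ev (rank U - 1)"
      using eigenvalue_before_rank_ge[OF eig U] True by simp
    also have "\<dots> \<le> ev k"
      using sorted_eigenframe_antimono[OF eig, of k "rank U - 1"] rank_le_card[of U] True by simp
    finally have "1/2 < ev k"
      using small by linarith
    then show ?thesis
      using eigenvector_sub_orth_proj_le[OF U ev_k] Pv True by (simp add: matrix_vector_mult_diff_rdistrib)
  next
    case False
    have "ev k \<le> ev (rank U)"
      using sorted_eigenframe_antimono[OF eig] False k by simp
    also have "\<dots> \<le> norm (M - U)"
      using eigenvalue_at_rank_le[OF eig U] False k by simp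
    finally have "ev k < 1/2"
      using small by linarith
    then show ?thesis
      using orth_proj_eigenvector_le[OF U ev_k] Pv False by (simp add: matrix_vector_mult_diff_rdistrib)
  qed
qed

lemma norm_top_eig_proj_diff_le:
  fixes M P U :: "real^'n^'n"
  assumes P: "top_eig_proj (rank U) M P" and U: "is_orth_proj U"
  shows "norm (P - U) \<le> 2 * (1 + sqrt (rank U) + norm U) * norm (M - U)"
proof (cases "norm (M - U) < 1/2")
  case True
  obtain \<nu> ev where eig: "sorted_eigenframe M \<nu> ev" and P_eq: "P = (\<Sum>k<rank U. outer (\<nu> k) (\<nu> k))"
    using P unfolding top_eig_proj_iff by blast
  note frame = sorted_eigenframe_orthonormal[OF eig]
  have "(norm (P - U))\<^sup>2 = (\<Sum>k<CARD('n). (norm ((P - U) *v \<nu> k))\<^sup>2)"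
    by (rule norm_matrix_eq_frame_sum[OF frame])
  also have "\<dots> \<le> (\<Sum>k<CARD('n). (2 * norm ((M - U) *v \<nu> k))\<^sup>2)"
    using top_eig_proj_diff_mult_eigenvector_le[OF eig U True] P_eq
    by (intro sum_mono power_mono) auto
  also have "\<dots> = (2 * norm (M - U))\<^sup>2"
    by (simp add: norm_matrix_eq_frame_sum[OF frame] power_mult_distrib sum_distrib_left)
  finally have "norm (P - U) \<le> 2 * norm (M - U)"
    by (rule power2_le_imp_le) simp
  also have "\<dots> \<le> 2 * (1 + sqrt (rank U) + norm U) * norm (M - U)"
    by (intro mult_right_mono) auto
  finally show ?thesis .
next
  case False
  have "norm (P - U) \<le> sqrt (rank U) + norm U"
    using norm_triangle_ineq4[of P U] norm_top_eig_proj[OF P rank_le_card] by simp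
  also have "\<dots> \<le> (sqrt (rank U) + norm U) * (2 * norm (M - U))"
    using False mult_left_mono[of 1 "2 * norm (M - U)" "sqrt (rank U) + norm U"] by simp
  also have "\<dots> \<le> 2 * (1 + sqrt (rank U) + norm U) * norm (M - U)"
    by (simp add: algebra_simps)
  finally show ?thesis .
qed

section \<open>Fixed points\<close>

lemma norm_G_arg_diff_le:
  assumes "0 \<le> \<alpha>" "\<forall>i\<in>{1..J}. norm (V i) \<le> B" "j \<in> {1..J}"
  shows "norm (G_arg J \<alpha> W V j - X) \<le> norm (W j - X) + 2 * \<alpha> * B"
proof -
  define a where "a = (if 1 < j then \<alpha> *\<^sub>R V (j - 1) else 0)"
  define b where "b = (if j < J then \<alpha> *\<^sub>R V (j + 1) else 0)"
  have "0 \<le> B"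
    using assms(2,3) norm_ge_zero order_trans by blast
  then have neighbour: "norm (if P then \<alpha> *\<^sub>R V i else 0) \<le> \<alpha> * B" if "P \<Longrightarrow> i \<in> {1..J}" for P i
    using that assms(1,2) by (auto intro: mult_left_mono)
  have "norm a \<le> \<alpha> * B"
    unfolding a_def by (rule neighbour) (use assms(3) in auto)
  moreover have "norm b \<le> \<alpha> * B"
    unfolding b_def by (rule neighbour) (use assms(3) in auto)
  moreover have "norm (G_arg J \<alpha> W V j - X) = norm (a + (W j - X) + b)"
    unfolding G_arg_def a_def b_def by (simp add: algebra_simps)
  moreover have "norm (a + (W j - X) + b) \<le> norm a + norm (W j - X) + norm b"
    by (meson add_mono_thms_linordered_semiring(3) norm_triangle_ineq order_trans)
  ultimately show ?thesis by linarith
qed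

lemma fixed_point_diff_le:
  fixes W V U :: "nat \<Rightarrow> real^'n^'n"
  assumes fp: "is_fixed_point J K \<alpha> W V" and U: "\<forall>j\<in>{1..J}. is_orth_proj (U j) \<and> rank (U j) = K j"
    and "0 \<le> \<alpha>" and j: "j \<in> {1..J}"
  shows "norm (V j - U j)
    \<le> 2 * (1 + sqrt (K j) + norm (U j)) * (norm (W j - U j) + 2 * \<alpha> * (\<Sum>i=1..J. sqrt (K i)))"
proof -
  have proj: "top_eig_proj (K i) (G_arg J \<alpha> W V i) (V i)" if "i \<in> {1..J}" for i
    using fp that unfolding is_fixed_point_def by blast
  have "norm (V i) \<le> (\<Sum>i=1..J. sqrt (K i))" if i: "i \<in> {1..J}" for i
  proof -
    have "norm (V i) = sqrt (K i)"
      using norm_top_eig_proj[OF proj[OF i]] rank_le_card[of "U i"] U i by simp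
    also have "\<dots> \<le> (\<Sum>i=1..J. sqrt (K i))"
      using i by (intro member_le_sum) auto
    finally show ?thesis .
  qed
  then have G_arg_le: "norm (G_arg J \<alpha> W V j - U j) \<le> norm (W j - U j) + 2 * \<alpha> * (\<Sum>i=1..J. sqrt (K i))"
    using norm_G_arg_diff_le \<open>0 \<le> \<alpha>\<close> j by blast
  have "norm (V j - U j) \<le> 2 * (1 + sqrt (K j) + norm (U j)) * norm (G_arg J \<alpha> W V j - U j)"
    using norm_top_eig_proj_diff_le[of "U j"] proj[OF j] U j by simp
  also have "\<dots> \<le> 2 * (1 + sqrt (K j) + norm (U j)) * (norm (W j - U j) + 2 * \<alpha> * (\<Sum>i=1..J. sqrt (K i)))"
    using G_arg_le by (intro mult_left_mono) auto
  finally show ?thesis .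
qed

theorem lemmaA1:
  fixes J :: nat and K :: "nat \<Rightarrow> nat" and U :: "nat \<Rightarrow> real^'n^'n"
  assumes "J \<ge> 1"
    and "\<forall>j\<in>{1..J}. is_orth_proj (U j) \<and> rank (U j) = K j"
  shows "\<exists>C>0. \<forall>(\<alpha>::real) (Uh :: nat \<Rightarrow> real^'n^'n) (Ubar :: nat \<Rightarrow> real^'n^'n).
           0 \<le> \<alpha> \<and> \<alpha> < 1 / (4 * sqrt 2 + 2)
           \<and> (\<forall>j\<in>{1..J}. is_orth_proj (Uh j) \<and> rank (Uh j) = K j)
           \<and> is_fixed_point J K \<alpha> Uh Ubar
           \<longrightarrow> (\<Sum>j=1..J. frob (Ubar j - U j)) \<le> C * ((\<Sum>j=1..J. frob (Uh j - U j)) + \<alpha>)"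
proof -
  define c where "c j = 2 * (1 + sqrt (K j) + norm (U j))" for j
  define B where "B = (\<Sum>j=1..J. sqrt (K j))"
  define C where "C = (\<Sum>j=1..J. c j) * (1 + 2 * B)"
  have c_pos: "0 < c j" for j
    unfolding c_def by (simp add: add_pos_nonneg)
  have "0 \<le> B"
    unfolding B_def by (simp add: sum_nonneg)
  have "0 < C"
    unfolding C_def using assms(1) c_pos \<open>0 \<le> B\<close> by (simp add: sum_pos add_pos_nonneg)
  moreover have "(\<Sum>j=1..J. frob (Ubar j - U j)) \<le> C * ((\<Sum>j=1..J. frob (Uh j - U j)) + \<alpha>)"
    if "0 \<le> \<alpha>" "is_fixed_point J K \<alpha> Uh Ubar" for \<alpha> Uh Ubar
  proof -
    let ?D = "\<Sum>j=1..J. norm (Uh j - U j)"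
    have "(\<Sum>j=1..J. norm (Ubar j - U j)) \<le> (\<Sum>j=1..J. c j * (norm (Uh j - U j) + 2 * \<alpha> * B))"
      using fixed_point_diff_le[OF that(2) assms(2) that(1)] unfolding c_def B_def
      by (intro sum_mono) simp
    also have "\<dots> \<le> (\<Sum>j=1..J. c j) * (?D + 2 * \<alpha> * B)"
      using c_pos \<open>0 \<le> B\<close> \<open>0 \<le> \<alpha>\<close> by (intro sum_mult_add_le) (auto simp: less_imp_le)
    also have "\<dots> \<le> C * (?D + \<alpha>)"
      unfolding C_def mult.assoc using c_pos \<open>0 \<le> B\<close> \<open>0 \<le> \<alpha>\<close>
      by (intro mult_left_mono) (auto simp: algebra_simps sum_nonneg less_imp_le)
    finally show ?thesis
      by (simp add: frob_eq_norm)
  qed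
  ultimately show ?thesis by blast
qed

end
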